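(* Let $q$ be a prime power, let $d+1$ be a divisor of $q-1$, and let $f:\mathbb{F}_q\to\mathbb{F}_q$ be $(d+1)$-divisible and differentially $d$-uniform. Then $f$ is almost-$(d+1)$-to-1.
   Context: For a divisor $k$ of $q-1$, $f$ is $k$-divisible if $f(x)=f'(x^k)$ for some map $f':\mathbb{F}_q\to\mathbb{F}_q$. $f$ is differentially $d$-uniform if $d=\max_{a\neq 0,\,b\in\mathbb{F}_q}|\{x\in\mathbb{F}_q: f(x+a)-f(x)=b\}|$. $f$ is almost-$k$-to-1 if there is a unique element of $\mathrm{Im}(f)$ with exactly one preimage and every other element of $\mathrm{Im}(f)$ has exactly $k$ preimages. *)

theory Defs
  imports Main
begin

text \<open>Functions on a finite field, modelled as a type of class finite and field;
  q is CARD('a) (automatically a prime power).\<close>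

definition k_divisible :: "nat \<Rightarrow> ('a::field \<Rightarrow> 'a) \<Rightarrow> bool" where
  "k_divisible k f \<longleftrightarrow> (\<exists>f'::'a \<Rightarrow> 'a. \<forall>x. f x = f' (x ^ k))"

definition diff_count :: "('a::{finite,field} \<Rightarrow> 'a) \<Rightarrow> 'a \<Rightarrow> 'a \<Rightarrow> nat" where
  "diff_count f a b = card {x. f (x + a) - f x = b}"

definition diff_uniformity :: "('a::{finite,field} \<Rightarrow> 'a) \<Rightarrow> nat" where
  "diff_uniformity f = Max {diff_count f a b | a b. a \<noteq> 0}"

definition differentially_uniform :: "nat \<Rightarrow> ('a::{finite,field} \<Rightarrow> 'a) \<Rightarrow> bool" where
  "differentially_uniform d f \<longleftrightarrow> d = diff_uniformity f"

definition almost_k_to_1 :: "nat \<Rightarrow> ('a::finite \<Rightarrow> 'b) \<Rightarrow> bool" where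
  "almost_k_to_1 k f \<longleftrightarrow>
     (\<exists>y0 \<in> range f. card (f -` {y0}) = 1 \<and>
        (\<forall>y \<in> range f. y \<noteq> y0 \<longrightarrow> card (f -` {y}) = k))"

end

theory Submission
  imports Defs "HOL-Computational_Algebra.Polynomial"
begin

text \<open>Let \<open>k = d + 1\<close> and let \<open>\<mu>\<^sub>k\<close> be the group of \<open>k\<close>-th roots of unity, which has exactly
  \<open>k\<close> elements because \<open>k\<close> divides \<open>q - 1\<close>. A \<open>k\<close>-divisible \<open>f\<close> is constant on every orbit
  \<open>\<mu>\<^sub>k u\<close>. Conversely, if \<open>f u = f v\<close> with \<open>v \<notin> \<mu>\<^sub>k u\<close>, then for \<open>a = v - u\<close> the equation
  \<open>f (x + a) = f x\<close> is solved by \<open>u\<close> and by the \<open>k - 1\<close> points \<open>a / (w - 1)\<close>, \<open>w \<in> \<mu>\<^sub>k - {1}\<close>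
  (for which \<open>x + a = w x\<close>), so it has \<open>k > d\<close> solutions. Hence the fibres of \<open>f\<close> are exactly
  the orbits: \<open>{0}\<close>, and orbits of size \<open>k\<close>.\<close>

lemma card_power_eq_le:
  fixes c :: "'a::field"
  assumes "n \<ge> 1"
  shows "card {x. x ^ n = c} \<le> n"
proof -
  let ?p = "monom (1::'a) n + [:-c:]"
  have deg: "degree ?p = n"
    using assms by (subst degree_add_eq_left) (simp_all add: degree_monom_eq)
  hence "card {x. poly ?p x = 0} \<le> n"
    using assms card_poly_roots_bound[of ?p] by fastforce
  moreover have "{x. poly ?p x = 0} = {x. x ^ n = c}" by (simp add: poly_monom)
  ultimately show ?thesis by simp
qed

lemma power_card_minus_one_eq_1:
  fixes x :: "'a::{finite,field}"
  assumes "x \<noteq> 0"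
  shows "x ^ (card (UNIV::'a set) - 1) = 1"
proof -
  let ?N = "UNIV - {0::'a}"
  have "(\<Prod>y\<in>?N. x * y) = (\<Prod>y\<in>?N. y)"
    by (rule prod.reindex_bij_witness[of _ "\<lambda>y. y / x" "\<lambda>y. x * y"]) (use assms in auto)
  moreover have "(\<Prod>y\<in>?N. x * y) = x ^ card ?N * (\<Prod>y\<in>?N. y)"
    by (simp add: prod.distrib)
  moreover have "card ?N = card (UNIV::'a set) - 1" by (simp add: card_Diff_subset)
  ultimately show ?thesis by simp
qed

lemma card_UNIV_field_ge_2: "card (UNIV::'a::{finite,field} set) \<ge> 2"
  using card_mono[OF finite_UNIV, of "{0::'a, 1}"] by simp

lemma card_fibre_power_eq_card_roots_of_unity:
  fixes x0 :: "'a::field"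
  assumes "x0 \<noteq> 0" and "k \<ge> 1"
  shows "card {x. x \<noteq> 0 \<and> x ^ k = x0 ^ k} = card {w::'a. w ^ k = 1}"
proof -
  have "{x. x \<noteq> 0 \<and> x ^ k = x0 ^ k} = (\<lambda>w. w * x0) ` {w. w ^ k = 1}"
  proof (rule set_eqI, rule iffI)
    fix x assume "x \<in> {x. x \<noteq> 0 \<and> x ^ k = x0 ^ k}"
    hence "(x / x0) ^ k = 1" "x = (x / x0) * x0" using assms(1) by (auto simp: power_divide)
    thus "x \<in> (\<lambda>w. w * x0) ` {w. w ^ k = 1}" by blast
  next
    fix x assume "x \<in> (\<lambda>w. w * x0) ` {w. w ^ k = 1}"
    then obtain w where "w ^ k = 1" "x = w * x0" by auto
    moreover hence "w \<noteq> 0" using assms(2) by (cases k) auto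
    ultimately show "x \<in> {x. x \<noteq> 0 \<and> x ^ k = x0 ^ k}"
      using assms(1) by (auto simp: power_mult_distrib)
  qed
  moreover have "inj_on (\<lambda>w. w * x0) {w. w ^ k = 1}" using assms(1) by (auto simp: inj_on_def)
  ultimately show ?thesis by (simp add: card_image)
qed

text \<open>The \<open>k\<close>-th power map on \<open>\<F>\<^sub>q\<^sup>*\<close> has fibres of size \<open>|\<mu>\<^sub>k|\<close> and lands in \<open>\<mu>\<^sub>m\<close>, where
  \<open>q - 1 = k m\<close>; comparing with \<open>|\<mu>\<^sub>m| \<le> m\<close> gives \<open>|\<mu>\<^sub>k| \<ge> k\<close>.\<close>

lemma card_roots_of_unity:
  assumes "k dvd (card (UNIV::'a::{finite,field} set) - 1)" and "k \<ge> 1"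
  shows "card {w::'a. w ^ k = 1} = k"
proof (rule antisym)
  show "card {w::'a. w ^ k = 1} \<le> k" using card_power_eq_le assms(2) by blast
next
  let ?M = "{w::'a. w ^ k = 1}"
  let ?N = "UNIV - {0::'a}"
  let ?pow = "\<lambda>x::'a. x ^ k"
  obtain m where m: "card (UNIV::'a set) - 1 = k * m" using assms(1) by blast
  have "m \<ge> 1" using m card_UNIV_field_ge_2[where 'a='a] by (cases m) auto
  have "(x ^ k) ^ m = 1" if "x \<noteq> 0" for x :: 'a
    using power_card_minus_one_eq_1[OF that] m by (simp add: power_mult)
  hence "?pow ` ?N \<subseteq> {y. y ^ m = 1}" by auto
  hence "card (?pow ` ?N) \<le> card {y::'a. y ^ m = 1}" by (intro card_mono) simp_all
  also have "\<dots> \<le> m" by (rule card_power_eq_le[OF \<open>m \<ge> 1\<close>])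
  finally have card_image_le: "card (?pow ` ?N) \<le> m" .
  have fibre: "card {x \<in> ?N. ?pow x = y} = card ?M" if "y \<in> ?pow ` ?N" for y
  proof -
    obtain x0 where "x0 \<noteq> 0" "y = x0 ^ k" using \<open>y \<in> ?pow ` ?N\<close> by blast
    moreover have "{x \<in> ?N. ?pow x = y} = {x. x \<noteq> 0 \<and> x ^ k = y}" by blast
    ultimately show ?thesis using card_fibre_power_eq_card_roots_of_unity[OF _ assms(2)] by simp
  qed
  have "k * m = card ?N" using m by (simp add: card_Diff_subset)
  also have "\<dots> = (\<Sum>y\<in>?pow ` ?N. card {x \<in> ?N. ?pow x = y})"
    using sum.image_gen[of ?N "\<lambda>_. (1::nat)" ?pow] by simp
  also have "\<dots> = card (?pow ` ?N) * card ?M" using fibre by simp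
  also have "\<dots> \<le> m * card ?M" using card_image_le by simp
  finally show "k \<le> card ?M" using \<open>m \<ge> 1\<close> by (simp add: mult.commute)
qed

lemma k_divisible_mult_root_of_unity:
  assumes "k_divisible k f" and "w ^ k = 1"
  shows "f (w * x) = f x"
  using assms by (auto simp: k_divisible_def power_mult_distrib)

lemma diff_count_le_diff_uniformity:
  assumes "a \<noteq> 0"
  shows "diff_count f a b \<le> diff_uniformity f"
proof -
  have "finite {diff_count f a b | a b. a \<noteq> 0}"
    by (rule finite_subset[of _ "range (\<lambda>(a,b). diff_count f a b)"]) auto
  thus ?thesis unfolding diff_uniformity_def using assms by (intro Max_ge) blast+
qed

lemma card_roots_of_unity_le_diff_count:
  fixes f :: "'a::{finite,field} \<Rightarrow> 'a"
  assumes "k_divisible k f" and "f u = f v" and not_orbit: "\<forall>w. w ^ k = 1 \<longrightarrow> v \<noteq> w * u"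
  shows "card {w::'a. w ^ k = 1} \<le> diff_count f (v - u) 0"
proof -
  let ?M = "{w::'a. w ^ k = 1}"
  let ?a = "v - u"
  let ?g = "\<lambda>w. ?a / (w - 1)"
  have "?a \<noteq> 0" using not_orbit by force
  have solutions: "insert u (?g ` (?M - {1})) \<subseteq> {x. f (x + ?a) - f x = 0}"
  proof -
    have "f (?g w + ?a) = f (?g w)" if "w \<in> ?M - {1}" for w
    proof -
      have "?g w + ?a = w * ?g w" using that by (simp add: field_simps)
      moreover have "f (w * ?g w) = f (?g w)"
        using k_divisible_mult_root_of_unity[OF assms(1)] that by blast
      ultimately show ?thesis by simp
    qed
    thus ?thesis using assms(2) by auto
  qed
  have "u \<notin> ?g ` (?M - {1})"
  proof
    assume "u \<in> ?g ` (?M - {1})"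
    then obtain w where "w \<in> ?M" "w \<noteq> 1" "u = ?a / (w - 1)" by auto
    thus False using not_orbit by (auto simp: field_simps)
  qed
  moreover have "inj_on ?g (?M - {1})" using \<open>?a \<noteq> 0\<close> by (auto simp: inj_on_def field_simps)
  moreover have "card (?M - {1}) = card ?M - 1" by simp
  moreover have "card ?M \<ge> 1" using card_mono[of ?M "{1}"] by simp
  ultimately have "card (insert u (?g ` (?M - {1}))) = card ?M"
    by (simp add: card_image)
  thus ?thesis using card_mono[OF _ solutions] unfolding diff_count_def by simp
qed

lemma preimage_eq_orbit_if_diff_count_less:
  fixes f :: "'a::{finite,field} \<Rightarrow> 'a"
  assumes "k_divisible k f" and "\<And>a. a \<noteq> 0 \<Longrightarrow> diff_count f a 0 < card {w::'a. w ^ k = 1}"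
  shows "f -` {f u} = (\<lambda>w. w * u) ` {w. w ^ k = 1}"
proof (rule set_eqI, rule iffI)
  fix v assume "v \<in> f -` {f u}"
  moreover have "v - u \<noteq> 0" if "\<forall>w. w ^ k = 1 \<longrightarrow> v \<noteq> w * u"
    using that by force
  ultimately show "v \<in> (\<lambda>w. w * u) ` {w. w ^ k = 1}"
    using card_roots_of_unity_le_diff_count[OF assms(1), of u v] assms(2)[of "v - u"]
    by fastforce
next
  fix v assume "v \<in> (\<lambda>w. w * u) ` {w. w ^ k = 1}"
  thus "v \<in> f -` {f u}" using k_divisible_mult_root_of_unity[OF assms(1)] by auto
qed

lemma almost_k_to_1_if_preimages_orbits:
  fixes f :: "'a::{finite,field} \<Rightarrow> 'b"
  assumes "\<And>u. f -` {f u} = (\<lambda>w. w * u) ` M" and "card M = k" and "k \<ge> 1"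
  shows "almost_k_to_1 k f"
  unfolding almost_k_to_1_def
proof (intro bexI[of _ "f 0"] conjI ballI impI)
  have "M \<noteq> {}" using assms(2,3) by auto
  thus "card (f -` {f 0}) = 1" using assms(1)[of 0] by (simp add: image_constant_conv)
next
  fix y assume "y \<in> range f" "y \<noteq> f 0"
  then obtain u where "y = f u" "u \<noteq> 0" by auto
  moreover have "inj_on (\<lambda>w. w * u) M" using \<open>u \<noteq> 0\<close> by (auto simp: inj_on_def)
  ultimately show "card (f -` {y}) = k" using assms(1)[of u] assms(2) by (simp add: card_image)
qed simp

theorem theorem3p2:
  fixes f :: "'a::{finite,field} \<Rightarrow> 'a" and d :: nat
  assumes "(d + 1) dvd (card (UNIV :: 'a set) - 1)"
    and "k_divisible (d + 1) f"
    and "differentially_uniform d f"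
  shows "almost_k_to_1 (d + 1) f"
proof -
  have card_M: "card {w::'a. w ^ (d + 1) = 1} = d + 1"
    using card_roots_of_unity[OF assms(1)] by simp
  have "diff_count f a 0 < card {w::'a. w ^ (d + 1) = 1}" if "a \<noteq> 0" for a
  proof -
    have "diff_count f a 0 \<le> d"
      using diff_count_le_diff_uniformity[OF that] assms(3)
      unfolding differentially_uniform_def by simp
    thus ?thesis using card_M by simp
  qed
  hence "f -` {f u} = (\<lambda>w. w * u) ` {w. w ^ (d + 1) = 1}" for u
    by (rule preimage_eq_orbit_if_diff_count_less[OF assms(2)])
  thus ?thesis by (rule almost_k_to_1_if_preimages_orbits[OF _ card_M]) simp
qed

end
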